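(* Let $S$ be a Rauzy scheme for a recurrent infinite word $W$, let $l_{\max}$ be the maximum length of the words written on the edges of $S$, and let $A$ be a finite factor of $W$. If $s$ is a nonextendable path in $S(A)$, then $|A|-2l_{\max}\le|F(s)|\le|A|$.
   Context: For a finite factor $A$ of $W$, $S(A)$ denotes the set of symmetric paths $s$ of $S$ with $F(s)\sqsubseteq A$; a path $s\in S(A)$ is nonextendable if there is no $s'\in S(A)$ with $s\sqsubseteq s'$ and $s'\neq s$. An infinite word is recurrent if every factor occurs infinitely often. $u\sqsubseteq w$: $u$ is a factor of $w$; $u\sqsubseteq_k w$: $u$ occurs in $w$ at least $k$ times. A graph with words is a strongly connected finite directed graph (multiple edges and loops allowed) in which every edge $e$ carries a front word $F(e)$ and a back word $B(e)$, and every vertex either has in-degree $1$ and out-degree $>1$ (distributing vertex) or in-degree $>1$ and out-degree $1$ (collecting vertex). A path is a finite nonempty sequence of edges $v_1\dots v_n$ with each $v_{i+1}$ starting where $v_i$ ends; subpaths and $s_1\sqsubseteq s_2$, $s_1\sqsubseteq_k s_2$ are defined via edge records (words over the alphabet of edges). A path is symmetric if its first edge starts at a collecting vertex and its last edge ends at a distributing vertex. For $s=v_1\dots v_n$, $F(s)$ is the concatenation, in order, of the front words of $v_1$ and of all $v_i$ ($i\ge2$) starting at a distributing vertex; $B(s)$ is the concatenation, in order, of the back words of all $v_i$ ($i\le n-1$) ending at a collecting vertex and of $v_n$. A Rauzy scheme for $W$ is a graph with words such that: (1) it has more than one edge; (2) front words of edges leaving a common distributing vertex have pairwise distinct first letters,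 and back words of edges entering a common collecting vertex have pairwise distinct last letters; (3) $F(s)=B(s)$ for every symmetric path $s$; (4) for symmetric paths $s_1,s_2$ and $k\ge1$, $F(s_1)\sqsubseteq_k F(s_2)$ implies $s_1\sqsubseteq_k s_2$; (5) all words on edges are factors of $W$; (6) every factor of $W$ is a factor of $F(s)$ for some symmetric path $s$; (7) for every edge $e$ there is a factor $u_e$ of $W$ such that every symmetric path $s$ with $u_e\sqsubseteq F(s)$ passes through $e$. *)

theory Defs
  imports Main "HOL-Library.Sublist"
begin

definition factor_of :: "'a list \<Rightarrow> (nat \<Rightarrow> 'a) \<Rightarrow> bool" where
  "factor_of u W \<longleftrightarrow> (\<exists>i. u = map W [i..<i + length u])"

definition recurrent :: "(nat \<Rightarrow> 'a) \<Rightarrow> bool" where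
  "recurrent W \<longleftrightarrow> (\<forall>u. factor_of u W \<longrightarrow>
      infinite {i. u = map W [i..<i + length u]})"

definition occ_count :: "'a list \<Rightarrow> 'a list \<Rightarrow> nat" where
  "occ_count u w = card {i. i + length u \<le> length w \<and> take (length u) (drop i w) = u}"

definition occurs_k :: "'a list \<Rightarrow> nat \<Rightarrow> 'a list \<Rightarrow> bool" where
  "occurs_k u k w \<longleftrightarrow> k \<le> occ_count u w"

text \<open>A graph is given by a vertex set V, an edge set E (edges are
  elements of an arbitrary type, so multiple edges and loops are allowed),
  source and target maps src, tgt, and front/back words Fw, Bw on edges.\<close>

definition indeg :: "'e set \<Rightarrow> ('e \<Rightarrow> 'v) \<Rightarrow> 'v \<Rightarrow> nat" where
  "indeg E tgt v = card {e \<in> E. tgt e = v}"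

definition outdeg :: "'e set \<Rightarrow> ('e \<Rightarrow> 'v) \<Rightarrow> 'v \<Rightarrow> nat" where
  "outdeg E src v = card {e \<in> E. src e = v}"

definition distributing :: "'e set \<Rightarrow> ('e \<Rightarrow> 'v) \<Rightarrow> ('e \<Rightarrow> 'v) \<Rightarrow> 'v \<Rightarrow> bool" where
  "distributing E src tgt v \<longleftrightarrow> indeg E tgt v = 1 \<and> outdeg E src v > 1"

definition collecting :: "'e set \<Rightarrow> ('e \<Rightarrow> 'v) \<Rightarrow> ('e \<Rightarrow> 'v) \<Rightarrow> 'v \<Rightarrow> bool" where
  "collecting E src tgt v \<longleftrightarrow> indeg E tgt v > 1 \<and> outdeg E src v = 1"

definition strongly_connected :: "'v set \<Rightarrow> 'e set \<Rightarrow> ('e \<Rightarrow> 'v) \<Rightarrow> ('e \<Rightarrow> 'v) \<Rightarrow> bool" where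
  "strongly_connected V E src tgt \<longleftrightarrow>
     (\<forall>u\<in>V. \<forall>v\<in>V. (u, v) \<in> {(src e, tgt e) | e. e \<in> E}\<^sup>*)"

definition graph_with_words ::
  "'v set \<Rightarrow> 'e set \<Rightarrow> ('e \<Rightarrow> 'v) \<Rightarrow> ('e \<Rightarrow> 'v) \<Rightarrow> bool" where
  "graph_with_words V E src tgt \<longleftrightarrow>
     finite V \<and> finite E \<and> V \<noteq> {} \<and>
     (\<forall>e\<in>E. src e \<in> V \<and> tgt e \<in> V) \<and>
     strongly_connected V E src tgt \<and>
     (\<forall>v\<in>V. distributing E src tgt v \<or> collecting E src tgt v)"

definition is_path :: "'e set \<Rightarrow> ('e \<Rightarrow> 'v) \<Rightarrow> ('e \<Rightarrow> 'v) \<Rightarrow> 'e list \<Rightarrow> bool" where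
  "is_path E src tgt s \<longleftrightarrow> s \<noteq> [] \<and> set s \<subseteq> E \<and>
     (\<forall>i. Suc i < length s \<longrightarrow> src (s ! Suc i) = tgt (s ! i))"

definition symmetric_path :: "'e set \<Rightarrow> ('e \<Rightarrow> 'v) \<Rightarrow> ('e \<Rightarrow> 'v) \<Rightarrow> 'e list \<Rightarrow> bool" where
  "symmetric_path E src tgt s \<longleftrightarrow> is_path E src tgt s \<and>
     collecting E src tgt (src (hd s)) \<and> distributing E src tgt (tgt (last s))"

definition path_F :: "'e set \<Rightarrow> ('e \<Rightarrow> 'v) \<Rightarrow> ('e \<Rightarrow> 'v) \<Rightarrow> ('e \<Rightarrow> 'a list) \<Rightarrow> 'e list \<Rightarrow> 'a list" where
  "path_F E src tgt Fw s =
     Fw (hd s) @ concat (map Fw (filter (\<lambda>e. distributing E src tgt (src e)) (tl s)))"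

definition path_B :: "'e set \<Rightarrow> ('e \<Rightarrow> 'v) \<Rightarrow> ('e \<Rightarrow> 'v) \<Rightarrow> ('e \<Rightarrow> 'a list) \<Rightarrow> 'e list \<Rightarrow> 'a list" where
  "path_B E src tgt Bw s =
     concat (map Bw (filter (\<lambda>e. collecting E src tgt (tgt e)) (butlast s))) @ Bw (last s)"

definition rauzy_scheme ::
  "(nat \<Rightarrow> 'a) \<Rightarrow> 'v set \<Rightarrow> 'e set \<Rightarrow> ('e \<Rightarrow> 'v) \<Rightarrow> ('e \<Rightarrow> 'v)
     \<Rightarrow> ('e \<Rightarrow> 'a list) \<Rightarrow> ('e \<Rightarrow> 'a list) \<Rightarrow> bool" where
  "rauzy_scheme W V E src tgt Fw Bw \<longleftrightarrow>
     graph_with_words V E src tgt \<and>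
     \<comment> \<open>(1)\<close>
     card E > 1 \<and>
     \<comment> \<open>(2)\<close>
     (\<forall>e1\<in>E. \<forall>e2\<in>E. e1 \<noteq> e2 \<and> src e1 = src e2 \<and> distributing E src tgt (src e1) \<longrightarrow>
        Fw e1 \<noteq> [] \<and> Fw e2 \<noteq> [] \<and> hd (Fw e1) \<noteq> hd (Fw e2)) \<and>
     (\<forall>e1\<in>E. \<forall>e2\<in>E. e1 \<noteq> e2 \<and> tgt e1 = tgt e2 \<and> collecting E src tgt (tgt e1) \<longrightarrow>
        Bw e1 \<noteq> [] \<and> Bw e2 \<noteq> [] \<and> last (Bw e1) \<noteq> last (Bw e2)) \<and>
     \<comment> \<open>(3)\<close>
     (\<forall>s. symmetric_path E src tgt s \<longrightarrow> path_F E src tgt Fw s = path_B E src tgt Bw s) \<and>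
     \<comment> \<open>(4)\<close>
     (\<forall>s1 s2 k. symmetric_path E src tgt s1 \<and> symmetric_path E src tgt s2 \<and> k \<ge> 1 \<and>
        occurs_k (path_F E src tgt Fw s1) k (path_F E src tgt Fw s2) \<longrightarrow> occurs_k s1 k s2) \<and>
     \<comment> \<open>(5)\<close>
     (\<forall>e\<in>E. factor_of (Fw e) W \<and> factor_of (Bw e) W) \<and>
     \<comment> \<open>(6)\<close>
     (\<forall>u. factor_of u W \<longrightarrow>
        (\<exists>s. symmetric_path E src tgt s \<and> sublist u (path_F E src tgt Fw s))) \<and>
     \<comment> \<open>(7)\<close>
     (\<forall>e\<in>E. \<exists>u. factor_of u W \<and>
        (\<forall>s. symmetric_path E src tgt s \<and> sublist u (path_F E src tgt Fw s) \<longrightarrow> e \<in> set s))"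

definition l_max :: "'e set \<Rightarrow> ('e \<Rightarrow> 'a list) \<Rightarrow> ('e \<Rightarrow> 'a list) \<Rightarrow> nat" where
  "l_max E Fw Bw = Max ((\<lambda>e. length (Fw e)) ` E \<union> (\<lambda>e. length (Bw e)) ` E)"

definition S_of :: "'e set \<Rightarrow> ('e \<Rightarrow> 'v) \<Rightarrow> ('e \<Rightarrow> 'v) \<Rightarrow> ('e \<Rightarrow> 'a list) \<Rightarrow> 'a list \<Rightarrow> 'e list set" where
  "S_of E src tgt Fw A = {s. symmetric_path E src tgt s \<and> sublist (path_F E src tgt Fw s) A}"

definition nonextendable ::
  "'e set \<Rightarrow> ('e \<Rightarrow> 'v) \<Rightarrow> ('e \<Rightarrow> 'v) \<Rightarrow> ('e \<Rightarrow> 'a list) \<Rightarrow> 'a list \<Rightarrow> 'e list \<Rightarrow> bool" where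
  "nonextendable E src tgt Fw A s \<longleftrightarrow> s \<in> S_of E src tgt Fw A \<and>
     \<not> (\<exists>s'\<in>S_of E src tgt Fw A. sublist s s' \<and> s' \<noteq> s)"

end

theory Submission
  imports Defs
begin

(*
  The upper bound is immediate, since F(s) is a factor of A.  For the lower bound we
  embed A into F(t) for some symmetric path t (axiom (6)) and write A = x F(s) y.
  Only axioms (2), (3) and (4) of a Rauzy scheme matter, so they are packaged in the
  locale rauzy_axioms.  There:
  - F(p s q) = B(p) F(s) F(q) for a symmetric subpath s of a symmetric path p s q,
    where B(p) collects back words and F(q) front words (axiom (3));
  - every occurrence of F(s) in F(t) comes from an occurrence of s in t, aligned so that
    B(p) covers exactly the letters before F(s) (counting argument with axiom (4));
  - if y were longer than l_max, s could be prolonged to the right by edges adding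
    exactly the front word of the first edge after s, a prefix of y; symmetrically,
    if x were longer than l_max, s could be prolonged to the left.
  Both contradict nonextendability, so |x|, |y| <= l_max.
*)

section \<open>Occurrences of a word in a word\<close>

definition occurrences :: "'a list \<Rightarrow> 'a list \<Rightarrow> nat set" where
  "occurrences u w = {i. i + length u \<le> length w \<and> take (length u) (drop i w) = u}"

lemma occurs_k_iff_card_occurrences: "occurs_k u k w \<longleftrightarrow> k \<le> card (occurrences u w)"
  by (simp add: occurs_k_def occ_count_def occurrences_def)

lemma finite_occurrences: "finite (occurrences u w)"
  by (rule finite_subset[of _ "{..length w}"]) (auto simp: occurrences_def)

lemma occurrence_split:
  assumes "i \<in> occurrences u w"
  shows "w = take i w @ u @ drop (i + length u) w"
proof -
  have "drop i w = take (length u) (drop i w) @ drop (length u) (drop i w)"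
    by (rule append_take_drop_id[symmetric])
  also have "\<dots> = u @ drop (i + length u) w" using assms by (simp add: occurrences_def add.commute)
  finally show ?thesis by (metis append_take_drop_id)
qed

lemma occurrence_in_middle: "length p \<in> occurrences u (p @ u @ q)"
  by (simp add: occurrences_def)

lemma path_infix:
  assumes "is_path E src tgt (p @ u @ q)" and "u \<noteq> []"
  shows "is_path E src tgt u"
proof -
  have "src (u ! Suc i) = tgt (u ! i)" if "Suc i < length u" for i
  proof -
    have "Suc (length p + i) < length (p @ u @ q)" using that by simp
    then have "src ((p @ u @ q) ! Suc (length p + i)) = tgt ((p @ u @ q) ! (length p + i))"
      using assms(1) unfolding is_path_def by blast
    then show ?thesis using that by (simp add: nth_append)
  qed
  then show ?thesis using assms by (auto simp: is_path_def)
qed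

lemma path_link:
  assumes "is_path E src tgt (p @ q)" and "p \<noteq> []" and "q \<noteq> []"
  shows "src (hd q) = tgt (last p)"
proof -
  have "Suc (length p - 1) < length (p @ q)" using assms by (cases q) auto
  then have "src ((p @ q) ! Suc (length p - 1)) = tgt ((p @ q) ! (length p - 1))"
    using assms(1) unfolding is_path_def by blast
  then show ?thesis using assms by (simp add: nth_append hd_conv_nth last_conv_nth)
qed

lemma symmetric_path_nonempty: "symmetric_path E src tgt s \<Longrightarrow> s \<noteq> []"
  by (simp add: symmetric_path_def is_path_def)

section \<open>The axioms of a Rauzy scheme used in the proof\<close>

locale rauzy_axioms =
  fixes E :: "'e set" and src tgt :: "'e \<Rightarrow> 'v" and Fw Bw :: "'e \<Rightarrow> 'a list"
  assumes back_word_nonempty: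
      "\<And>e. e \<in> E \<Longrightarrow> collecting E src tgt (tgt e) \<Longrightarrow> Bw e \<noteq> []"
    and front_eq_back:
      "\<And>s. symmetric_path E src tgt s \<Longrightarrow> path_F E src tgt Fw s = path_B E src tgt Bw s"
    and occurrences_reflect:
      "\<And>s1 s2 k. symmetric_path E src tgt s1 \<Longrightarrow> symmetric_path E src tgt s2 \<Longrightarrow> k \<ge> 1
        \<Longrightarrow> occurs_k (path_F E src tgt Fw s1) k (path_F E src tgt Fw s2) \<Longrightarrow> occurs_k s1 k s2"
begin

abbreviation "coll v \<equiv> collecting E src tgt v"
abbreviation "distr v \<equiv> distributing E src tgt v"
abbreviation "path \<equiv> is_path E src tgt"
abbreviation "sym_path \<equiv> symmetric_path E src tgt"
abbreviation "F \<equiv> path_F E src tgt Fw"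
abbreviation "B \<equiv> path_B E src tgt Bw"

text \<open>The letters contributed by a path p preceding, resp. a path q following, a
  symmetric path: back words of edges ending at collecting vertices, resp. front words
  of edges starting at distributing vertices.\<close>

definition B_prefix :: "'e list \<Rightarrow> 'a list" where
  "B_prefix p = concat (map Bw (filter (\<lambda>e. coll (tgt e)) p))"

definition F_suffix :: "'e list \<Rightarrow> 'a list" where
  "F_suffix q = concat (map Fw (filter (\<lambda>e. distr (src e)) q))"

lemma B_prefix_append: "B_prefix (p @ q) = B_prefix p @ B_prefix q"
  by (simp add: B_prefix_def)

lemma B_prefix_take_mono: "i \<le> j \<Longrightarrow> length (B_prefix (take i t)) \<le> length (B_prefix (take j t))"
  by (metis B_prefix_append le_add_diff_inverse length_append le_add1 take_add)

lemma F_append: "s \<noteq> [] \<Longrightarrow> F (s @ q) = F s @ F_suffix q"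
  by (cases s) (simp_all add: path_F_def F_suffix_def)

lemma B_append: "s \<noteq> [] \<Longrightarrow> B (p @ s) = B_prefix p @ B s"
  by (simp add: path_B_def B_prefix_def butlast_append)

text \<open>The word of a symmetric path splits along a symmetric subpath (axiom (3)).\<close>

lemma F_of_infix:
  assumes psq: "sym_path (p @ s @ q)" and s: "sym_path s"
  shows "F (p @ s @ q) = B_prefix p @ F s @ F_suffix q"
proof -
  have s_ne: "s \<noteq> []" using s by (rule symmetric_path_nonempty)
  have "path (s @ q)"
    using path_infix[of E src tgt p "s @ q" "[]"] psq s_ne by (simp add: symmetric_path_def)
  moreover have "distr (tgt (last (s @ q)))"
    using psq s by (cases "q = []") (simp_all add: symmetric_path_def)
  ultimately have sq: "sym_path (s @ q)" using s s_ne by (simp add: symmetric_path_def)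
  have "F (p @ s @ q) = B (p @ s @ q)" using front_eq_back psq by simp
  also have "\<dots> = B_prefix p @ B (s @ q)" using B_append s_ne by simp
  also have "B (s @ q) = F (s @ q)" using front_eq_back sq by simp
  also have "F (s @ q) = F s @ F_suffix q" using F_append s_ne by simp
  finally show ?thesis .
qed

text \<open>Distinct occurrences of s in t give distinct offsets in F(t): before an
  occurrence of s, the edge entering the collecting vertex where s starts contributes
  a nonempty back word.\<close>

lemma B_prefix_grows_at_occurrence:
  assumes s: "sym_path s" and t: "path t" and j: "j \<in> occurrences s t" and ij: "i < j"
  shows "length (B_prefix (take i t)) < length (B_prefix (take j t))"
proof -
  define p where "p = take j t"
  define e where "e = last p"
  have p_ne: "p \<noteq> []" using ij j by (auto simp: p_def occurrences_def)
  have "t = p @ s @ drop (j + length s) t" using occurrence_split[OF j] by (simp add: p_def)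
  then have "path (p @ (s @ drop (j + length s) t))" using t by simp
  then have "src (hd s) = tgt e"
    using path_link p_ne symmetric_path_nonempty[OF s] by (fastforce simp: e_def)
  then have e_coll: "coll (tgt e)" using s by (simp add: symmetric_path_def)
  have "e \<in> set p" using p_ne by (simp add: e_def)
  then have "e \<in> set t" using set_take_subset[of j t] by (auto simp: p_def)
  then have "0 < length (Bw e)" using t e_coll back_word_nonempty by (auto simp: is_path_def)
  moreover have "butlast p = take (j - 1) t"
    using j by (simp add: p_def butlast_take occurrences_def)
  then have "p = take (j - 1) t @ [e]"
    using append_butlast_last_id[OF p_ne] by (simp add: e_def)
  then have "length (B_prefix p) = length (B_prefix (take (j - 1) t)) + length (Bw e)"
    using e_coll by (simp add: B_prefix_append B_prefix_def)
  moreover have "length (B_prefix (take i t)) \<le> length (B_prefix (take (j - 1) t))"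
    using ij by (intro B_prefix_take_mono) simp
  ultimately show ?thesis unfolding p_def by linarith
qed

text \<open>The map
  from occurrences of s to occurrences of F(s) is injective, and axiom (4) says there
  are at least as many occurrences of s as of F(s); hence it is onto.\<close>

lemma occurrence_lifting:
  assumes s: "sym_path s" and t: "sym_path t" and r: "r \<in> occurrences (F s) (F t)"
  obtains i where "i \<in> occurrences s t" and "length (B_prefix (take i t)) = r"
proof -
  define \<phi> where "\<phi> i = length (B_prefix (take i t))" for i
  let ?Os = "occurrences s t" and ?OF = "occurrences (F s) (F t)"
  have into: "\<phi> ` ?Os \<subseteq> ?OF"
  proof
    fix r' assume "r' \<in> \<phi> ` ?Os"
    then obtain i where i: "i \<in> ?Os" and r': "r' = \<phi> i" by blast
    let ?p = "take i t" and ?q = "drop (i + length s) t"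
    have split: "t = ?p @ s @ ?q" by (rule occurrence_split[OF i])
    then have "F t = B_prefix ?p @ F s @ F_suffix ?q"
      using F_of_infix[of ?p s ?q] s t by simp
    then show "r' \<in> ?OF" using occurrence_in_middle r' by (metis \<phi>_def)
  qed
  have "strict_mono_on ?Os \<phi>"
    using B_prefix_grows_at_occurrence s t by (auto simp: strict_mono_on_def \<phi>_def symmetric_path_def)
  then have inj: "inj_on \<phi> ?Os" by (rule strict_mono_on_imp_inj_on)
  have "card ?Os \<le> card ?OF" using card_inj_on_le[OF inj into finite_occurrences] .
  moreover have "card ?OF \<le> card ?Os"
  proof -
    have "1 \<le> card ?OF" using r finite_occurrences by (metis One_nat_def Suc_leI card_gt_0_iff empty_iff)
    then show ?thesis
      using occurrences_reflect[OF s t] by (simp add: occurs_k_iff_card_occurrences)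
  qed
  ultimately have "\<phi> ` ?Os = ?OF"
    using card_subset_eq[OF finite_occurrences into] card_image[OF inj] by simp
  then show ?thesis using r that by (metis \<phi>_def imageE)
qed

lemma distr_after_symmetric:
  assumes "sym_path s" and "path (s @ q)" and "q \<noteq> []"
  shows "distr (src (hd q))"
  using assms path_link[of E src tgt s q] symmetric_path_nonempty[OF assms(1)]
  by (simp add: symmetric_path_def)

lemma coll_before_symmetric:
  assumes "sym_path s" and "path (p @ s)" and "p \<noteq> []"
  shows "coll (tgt (last p))"
  using assms path_link[of E src tgt p s] symmetric_path_nonempty[OF assms(1)]
  by (simp add: symmetric_path_def)

lemma extend_right:
  assumes s: "sym_path s" and sq: "path (s @ q)" and q_ne: "q \<noteq> []"
    and q_end: "distr (tgt (last q))"
  obtains h where "h \<noteq> []" "sym_path (s @ h)" "F (s @ h) = F s @ Fw (hd q)"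
proof -
  define P where "P k \<longleftrightarrow> k < length q \<and> distr (tgt (q ! k))" for k
  define j where "j = (LEAST k. P k)"
  define h where "h = take (Suc j) q"
  have "P (length q - 1)" using q_ne q_end by (simp add: P_def last_conv_nth)
  then have Pj: "P j" unfolding j_def by (rule LeastI)
  have s_ne: "s \<noteq> []" using s by (rule symmetric_path_nonempty)
  have h_ne: "h \<noteq> []" using q_ne by (simp add: h_def)
  have "path (s @ h)"
    using path_infix[of E src tgt "[]" "s @ h" "drop (Suc j) q"] sq s_ne by (simp add: h_def)
  moreover have "last h = q ! j" using Pj by (simp add: h_def P_def take_Suc_conv_app_nth)
  ultimately have sh: "sym_path (s @ h)"
    using s s_ne h_ne Pj by (simp add: symmetric_path_def P_def)
  have q_path: "path q" using path_infix[of E src tgt s q "[]"] sq q_ne by simp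
  have hd_distr: "distr (src (hd q))" using distr_after_symmetric s sq q_ne .
  have inner: "\<not> distr (src e)" if e_in: "e \<in> set (tl h)" for e
  proof -
    obtain k where "k < length (tl h)" "e = tl h ! k"
      using e_in unfolding in_set_conv_nth by blast
    then have k: "Suc k < length q" "k < j" "e = q ! Suc k" by (auto simp: h_def nth_tl)
    have "src e = tgt (q ! k)" using q_path k(1,3) unfolding is_path_def by blast
    moreover have "\<not> P k" using not_less_Least k(2) unfolding j_def by blast
    ultimately show ?thesis using k(1) by (simp add: P_def)
  qed
  then have no_inner: "filter (\<lambda>e. distr (src e)) (tl h) = []" by (auto simp: filter_empty_conv)
  have h_cons: "h = hd q # tl h" using h_ne q_ne by (simp add: h_def take_Suc)
  have "F_suffix h = Fw (hd q)"
    by (subst h_cons) (simp add: F_suffix_def hd_distr no_inner)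
  then show ?thesis using that h_ne sh F_append s_ne by simp
qed

lemma extend_left:
  assumes s: "sym_path s" and ps: "path (p @ s)" and p_ne: "p \<noteq> []"
    and p_start: "coll (src (hd p))"
  obtains g where "g \<noteq> []" "sym_path (g @ s)" "F (g @ s) = Bw (last p) @ F s"
proof -
  define P where "P k \<longleftrightarrow> k < length p \<and> coll (src (p ! k))" for k
  define j where "j = (GREATEST k. P k)"
  define g where "g = drop j p"
  have bounded: "P k \<Longrightarrow> k \<le> length p" for k by (simp add: P_def)
  have "P 0" using p_ne p_start by (simp add: P_def hd_conv_nth)
  then have Pj: "P j" unfolding j_def using bounded by (rule GreatestI_nat)
  have s_ne: "s \<noteq> []" using s by (rule symmetric_path_nonempty)
  have g_ne: "g \<noteq> []" using Pj by (simp add: g_def P_def)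
  have "p @ s = take j p @ (g @ s) @ []" by (simp add: g_def)
  then have "path (g @ s)" using path_infix[of E src tgt "take j p" "g @ s" "[]"] ps g_ne
    by (metis Nil_is_append_conv)
  moreover have "hd g = p ! j" using Pj by (simp add: g_def P_def hd_drop_conv_nth)
  ultimately have gs: "sym_path (g @ s)"
    using s s_ne g_ne Pj by (simp add: symmetric_path_def P_def)
  have p_path: "path p" using path_infix[of E src tgt "[]" p s] ps p_ne by simp
  have last_coll: "coll (tgt (last p))" using coll_before_symmetric s ps p_ne .
  have inner: "\<not> coll (tgt e)" if e_in: "e \<in> set (butlast g)" for e
  proof -
    obtain k where "k < length (butlast g)" "e = butlast g ! k"
      using e_in unfolding in_set_conv_nth by blast
    then have k: "e = p ! (j + k)" "Suc (j + k) < length p"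
      using Pj by (auto simp: g_def nth_butlast P_def)
    then have "tgt e = src (p ! Suc (j + k))" using p_path unfolding is_path_def by auto
    moreover have "\<not> P (Suc (j + k))"
      using Greatest_le_nat[of P "Suc (j + k)" "length p"] bounded by (auto simp: j_def)
    ultimately show ?thesis using k by (simp add: P_def)
  qed
  then have no_inner: "filter (\<lambda>e. coll (tgt e)) (butlast g) = []" by (auto simp: filter_empty_conv)
  have "last g = last p" using Pj by (simp add: g_def P_def)
  then have g_snoc: "g = butlast g @ [last p]" using g_ne by (metis append_butlast_last_id)
  have "B_prefix g = Bw (last p)"
    by (subst g_snoc) (simp add: B_prefix_def last_coll no_inner)
  moreover have "F (g @ s @ []) = B_prefix g @ F s @ F_suffix []"
    using gs s by (intro F_of_infix) simp_all
  ultimately show ?thesis using that g_ne gs by (simp add: F_suffix_def)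
qed

lemma right_margin:
  assumes s: "sym_path s" and t: "sym_path (p @ s @ q)" and q_word: "F_suffix q = y @ b"
    and bound: "\<And>e. e \<in> E \<Longrightarrow> length (Fw e) \<le> L" and long: "L < length y"
  obtains h where "h \<noteq> []" "sym_path (s @ h)" "sublist (F (s @ h)) (F s @ y)"
proof -
  have q_ne: "q \<noteq> []" using q_word long by (auto simp: F_suffix_def)
  have sq: "path (s @ q)"
    using path_infix[of E src tgt p "s @ q" "[]"] t symmetric_path_nonempty[OF s]
    by (simp add: symmetric_path_def)
  have q_end: "distr (tgt (last q))" using t q_ne by (simp add: symmetric_path_def)
  have "hd q \<in> E" using sq q_ne by (auto simp: is_path_def)
  then have short: "length (Fw (hd q)) < length y" using bound long by (meson le_less_trans)
  have "F_suffix q = Fw (hd q) @ F_suffix (tl q)"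
    using distr_after_symmetric[OF s sq q_ne] q_ne by (cases q) (simp_all add: F_suffix_def)
  then have "prefix (Fw (hd q)) (y @ b)" using q_word by (metis prefixI)
  moreover have "prefix y (y @ b)" by (rule prefixI) simp
  ultimately have "prefix (Fw (hd q)) y \<or> prefix y (Fw (hd q))" by (rule prefix_same_cases)
  then have "prefix (Fw (hd q)) y" using short prefix_length_le by fastforce
  moreover obtain h where "h \<noteq> []" "sym_path (s @ h)" "F (s @ h) = F s @ Fw (hd q)"
    using extend_right s sq q_ne q_end by blast
  ultimately show ?thesis using that by simp
qed

lemma left_margin:
  assumes s: "sym_path s" and t: "sym_path (p @ s @ q)" and p_word: "B_prefix p = a @ x"
    and bound: "\<And>e. e \<in> E \<Longrightarrow> length (Bw e) \<le> L" and long: "L < length x"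
  obtains g where "g \<noteq> []" "sym_path (g @ s)" "sublist (F (g @ s)) (x @ F s)"
proof -
  have p_ne: "p \<noteq> []" using p_word long by (auto simp: B_prefix_def)
  have ps: "path (p @ s)"
    using path_infix[of E src tgt "[]" "p @ s" q] t p_ne by (simp add: symmetric_path_def)
  have p_start: "coll (src (hd p))" using t p_ne by (simp add: symmetric_path_def)
  have "last p \<in> E" using ps p_ne by (auto simp: is_path_def)
  then have short: "length (Bw (last p)) < length x" using bound long by (meson le_less_trans)
  have "B_prefix (butlast p @ [last p]) = B_prefix (butlast p) @ Bw (last p)"
    using coll_before_symmetric[OF s ps p_ne] by (simp add: B_prefix_append B_prefix_def)
  then have "B_prefix p = B_prefix (butlast p) @ Bw (last p)"
    using append_butlast_last_id[OF p_ne] by simp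
  then have "suffix (Bw (last p)) (a @ x)" using p_word by (metis suffixI)
  moreover have "suffix x (a @ x)" by (rule suffixI) simp
  ultimately have "suffix (Bw (last p)) x \<or> suffix x (Bw (last p))" by (rule suffix_same_cases)
  then have "suffix (Bw (last p)) x" using short suffix_length_le by fastforce
  moreover obtain g where "g \<noteq> []" "sym_path (g @ s)" "F (g @ s) = Bw (last p) @ F s"
    using extend_left s ps p_ne p_start by blast
  ultimately show ?thesis using that by simp
qed

lemma nonextendable_margins:
  assumes s: "sym_path s" and A: "A = x @ F s @ y"
    and maximal: "\<And>s'. sym_path s' \<Longrightarrow> sublist (F s') A \<Longrightarrow> sublist s s' \<Longrightarrow> s' = s"
    and t: "sym_path t" and At: "sublist A (F t)"
    and bound: "\<And>e. e \<in> E \<Longrightarrow> length (Fw e) \<le> L \<and> length (Bw e) \<le> L"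
  shows "length x \<le> L \<and> length y \<le> L"
proof -
  obtain a b where Ft: "F t = (a @ x) @ F s @ (y @ b)" using At A by (auto simp: sublist_def)
  then have "length (a @ x) \<in> occurrences (F s) (F t)" by (simp only: occurrence_in_middle)
  then obtain i where i: "i \<in> occurrences s t" "length (B_prefix (take i t)) = length (a @ x)"
    using occurrence_lifting s t by blast
  define p where "p = take i t"
  define q where "q = drop (i + length s) t"
  have t_split: "t = p @ s @ q" unfolding p_def q_def by (rule occurrence_split[OF i(1)])
  then have "B_prefix p @ (F s @ F_suffix q) = (a @ x) @ (F s @ (y @ b))"
    using F_of_infix[of p s q] t s Ft by simp
  moreover have "length (B_prefix p) = length (a @ x)" using i(2) by (simp add: p_def)
  ultimately have p_word: "B_prefix p = a @ x" and "F s @ F_suffix q = F s @ (y @ b)"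
    by (metis append_eq_append_conv)+
  then have q_word: "F_suffix q = y @ b" by simp
  have t': "sym_path (p @ s @ q)" using t t_split by simp
  have "length y \<le> L"
  proof (rule ccontr)
    assume "\<not> length y \<le> L"
    then have "L < length y" by simp
    then obtain h where "h \<noteq> []" "sym_path (s @ h)" "sublist (F (s @ h)) (F s @ y)"
      using right_margin[OF s t' q_word] bound by blast
    moreover have "sublist (F s @ y) A" by (simp add: A)
    ultimately have "sublist (F (s @ h)) A" using sublist_order.order.trans by blast
    then have "s @ h = s" using maximal[OF \<open>sym_path (s @ h)\<close>] by simp
    then show False using \<open>h \<noteq> []\<close> by simp
  qed
  moreover have "length x \<le> L"
  proof (rule ccontr)
    assume "\<not> length x \<le> L"
    then have "L < length x" by simp
    then obtain g where "g \<noteq> []" "sym_path (g @ s)" "sublist (F (g @ s)) (x @ F s)"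
      using left_margin[OF s t' p_word] bound by blast
    moreover have "sublist (x @ F s) A" by (simp add: A)
    ultimately have "sublist (F (g @ s)) A" using sublist_order.order.trans by blast
    then have "g @ s = s" using maximal[OF \<open>sym_path (g @ s)\<close>] by simp
    then show False using \<open>g \<noteq> []\<close> by simp
  qed
  ultimately show ?thesis by simp
qed

end

text \<open>A Rauzy scheme satisfies the axioms used above; axiom (2) gives nonempty back
  words on edges entering a collecting vertex, since such a vertex has a second
  incoming edge.\<close>

lemma rauzy_scheme_axioms:
  assumes "rauzy_scheme W V E src tgt Fw Bw"
  shows "rauzy_axioms E src tgt Fw Bw"
proof
  note R = assms[unfolded rauzy_scheme_def]
  fix e assume e: "e \<in> E" and coll: "collecting E src tgt (tgt e)"
  let ?In = "{e' \<in> E. tgt e' = tgt e}"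
  have "1 < card ?In" using coll by (simp add: collecting_def indeg_def)
  then have "\<not> (\<forall>a\<in>?In. \<forall>b\<in>?In. a = b)"
    using card_le_Suc0_iff_eq[of ?In] card.infinite by fastforce
  then obtain e2 where "e2 \<in> E" "tgt e2 = tgt e" "e2 \<noteq> e" using e by blast
  then show "Bw e \<noteq> []" using R e coll by metis
qed (use assms in \<open>simp_all add: rauzy_scheme_def\<close>)

lemma l_max_bound:
  assumes "finite E" and "e \<in> E"
  shows "length (Fw e) \<le> l_max E Fw Bw \<and> length (Bw e) \<le> l_max E Fw Bw"
  using assms unfolding l_max_def by (auto intro!: Max_ge)

theorem lemma7p2:
  fixes W :: "nat \<Rightarrow> 'a" and V :: "'v set" and E :: "'e set"
    and src tgt :: "'e \<Rightarrow> 'v" and Fw Bw :: "'e \<Rightarrow> 'a list"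
    and A :: "'a list" and s :: "'e list"
  assumes "recurrent W"
    and "rauzy_scheme W V E src tgt Fw Bw"
    and "factor_of A W"
    and "nonextendable E src tgt Fw A s"
  shows "int (length A) - 2 * int (l_max E Fw Bw) \<le> int (length (path_F E src tgt Fw s))
       \<and> length (path_F E src tgt Fw s) \<le> length A"
proof -
  interpret rauzy_axioms E src tgt Fw Bw using assms(2) by (rule rauzy_scheme_axioms)
  have "finite E" using assms(2) by (simp add: rauzy_scheme_def graph_with_words_def)
  then have bound: "\<And>e. e \<in> E \<Longrightarrow> length (Fw e) \<le> l_max E Fw Bw \<and> length (Bw e) \<le> l_max E Fw Bw"
    by (rule l_max_bound)
  from assms(4) have s: "sym_path s" and sA: "sublist (F s) A"
    and maximal: "\<And>s'. sym_path s' \<Longrightarrow> sublist (F s') A \<Longrightarrow> sublist s s' \<Longrightarrow> s' = s"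
    by (auto simp: nonextendable_def S_of_def)
  obtain x y where A: "A = x @ F s @ y" using sA by (auto simp: sublist_def)
  obtain t where "sym_path t" "sublist A (F t)"
    using assms(2,3) by (auto simp: rauzy_scheme_def)
  then have "length x \<le> l_max E Fw Bw \<and> length y \<le> l_max E Fw Bw"
    using nonextendable_margins[OF s A maximal] bound by blast
  then show ?thesis using A by simp
qed

end
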